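(* Let $\nu\geq 1$ and $n_d>1$ be integers and let $\boldsymbol{\eta}^1,\ldots,\boldsymbol{\eta}^{n_d}\in\mathbb{R}^\nu$ satisfy $\frac{1}{n_d}\sum_{j=1}^{n_d}\boldsymbol{\eta}^j=\mathbf{0}_\nu$ and $\frac{1}{n_d-1}\sum_{j=1}^{n_d}\boldsymbol{\eta}^j\otimes\boldsymbol{\eta}^j=[I_\nu]$. Set $s=\left(\frac{4}{n_d(2+\nu)}\right)^{1/(\nu+4)}$, $\hat s=s/\sqrt{s^2+(n_d-1)/n_d}$, and $$p_{\mathbf{H}}(\mathbf{y})=\frac{1}{n_d}\sum_{j=1}^{n_d}\frac{1}{(\sqrt{2\pi}\,\hat s)^\nu}\exp\Big(-\frac{1}{2\hat s^2}\Big\|\mathbf{y}-\frac{\hat s}{s}\boldsymbol{\eta}^j\Big\|^2\Big),\quad \mathbf{y}\in\mathbb{R}^\nu .$$ Let $f=\log p_{\mathbf{H}}$, $\mathbf{g}=(g_1,\ldots,g_\nu)=\nabla f$ (so $g_j=\partial f/\partial y_j$), $\hat g=\|\mathbf{g}\|$, and $h=\nabla^2 f=\sum_{j=1}^\nu\partial^2 f/\partial y_j^2$. Let $\mathbf{Y}$ be an $\mathbb{R}^\nu$-valued normalized Gaussian random vector (density $p_{\mathbf{Y}}(\mathbf{y})=(2\pi)^{-\nu/2}e^{-\|\mathbf{y}\|^2/2}$) and $\mathbb{H}=L^2(\mathbb{R}^\nu;p_{\mathbf{Y}}(\mathbf{y})\,d\mathbf{y})$. Then: (i) $f$ is continuous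 on $\mathbb{R}^\nu$ and belongs to $\mathbb{H}$, i.e. $E\{f(\mathbf{Y})^2\}=\|f\|_{\mathbb{H}}^2<+\infty$; (ii) $\mathbf{g}$ is a continuous $\mathbb{R}^\nu$-valued function on $\mathbb{R}^\nu$, each $g_j$ ($j=1,\ldots,\nu$) belongs to $\mathbb{H}$, $\hat g$ belongs to $\mathbb{H}$, and $E\{\hat g(\mathbf{Y})^4\}<+\infty$; (iii) $h$ is a continuous real-valued function on $\mathbb{R}^\nu$ and belongs to $\mathbb{H}$, i.e. $E\{|h(\mathbf{Y})|^2\}=\|h\|_{\mathbb{H}}^2<+\infty$.
   Context: $\mathbb{H}=L^2(\mathbb{R}^\nu;p_{\mathbf{Y}}(\mathbf{y})\,d\mathbf{y})$ is the Hilbert space of real functions on $\mathbb{R}^\nu$ square integrable with respect to the standard Gaussian measure, with inner product $\langle u,v\rangle_{\mathbb{H}}=\int_{\mathbb{R}^\nu}u(\mathbf{y})v(\mathbf{y})p_{\mathbf{Y}}(\mathbf{y})\,d\mathbf{y}=E\{u(\mathbf{Y})v(\mathbf{Y})\}$. The function $p_{\mathbf{H}}$ is the (modified) Gaussian kernel density estimate built from the training points $\boldsymbol{\eta}^j$. *)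

theory Defs
  imports "HOL-Analysis.Analysis"
begin

text \<open>Dimension nu = CARD('n); vectors in R^nu are real^'n.\<close>

definition kde_s :: "nat \<Rightarrow> nat \<Rightarrow> real" where
  "kde_s nu nd = (4 / (real nd * (2 + real nu))) powr (1 / (real nu + 4))"

definition kde_shat :: "nat \<Rightarrow> nat \<Rightarrow> real" where
  "kde_shat nu nd = kde_s nu nd / sqrt ((kde_s nu nd)\<^sup>2 + (real nd - 1) / real nd)"

definition pH :: "nat \<Rightarrow> (nat \<Rightarrow> real^'n) \<Rightarrow> real^'n \<Rightarrow> real" where
  "pH nd eta y =
     (let nu = CARD('n); s = kde_s nu nd; sh = kde_shat nu nd in
      (1 / real nd) * (\<Sum>j\<in>{1..nd}.
         1 / (sqrt (2 * pi) * sh) ^ nu *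
         exp (- (1 / (2 * sh\<^sup>2)) * (norm (y - (sh / s) *\<^sub>R eta j))\<^sup>2)))"

definition std_gauss_pdf :: "real^'n \<Rightarrow> real" where
  "std_gauss_pdf y = (2 * pi) powr (- real CARD('n) / 2) * exp (- (norm y)\<^sup>2 / 2)"

definition std_gauss :: "(real^'n) measure" where
  "std_gauss = density lborel (\<lambda>y. ennreal (std_gauss_pdf y))"

definition in_H :: "(real^'n \<Rightarrow> real) \<Rightarrow> bool" where
  "in_H u \<longleftrightarrow> u \<in> borel_measurable std_gauss \<and> integrable std_gauss (\<lambda>y. (u y)\<^sup>2)"

end

(*
  The kernel density estimate is a Gaussian mixture p(y) = w * sum_j exp (- alpha * |y - a_j|^2).
  Expanding the squares,
    ln p(y) = ln w - alpha * |y|^2 + ln (sum_j exp (2 alpha a_j . y - alpha |a_j|^2)),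
  and the last term is a log-sum-exp of affine functions. Its gradient is the softmax-weighted
  mean of the slopes 2 alpha a_j and its Hessian is their softmax-weighted covariance, so both
  are bounded. Hence ln p grows at most quadratically, its gradient at most linearly, and its
  Laplacian is bounded; and every continuous function of polynomial growth is square
  integrable against the standard Gaussian measure, because exp (- |y|^2 / 2) beats any
  polynomial.
*)

theory Submission
  imports Defs "HOL-Probability.Distributions"
begin

section \<open>Gaussian integrability of polynomially bounded functions\<close>

lemma integrable_exp_neg_mult_square:
  fixes c :: real
  assumes "c > 0"
  shows "integrable lborel (\<lambda>x::real. exp (- c * x\<^sup>2))"
proof -
  define \<sigma> where "\<sigma> = sqrt (1 / (2 * c))"
  have \<sigma>: "\<sigma>\<^sup>2 = 1 / (2 * c)"
    using assms by (simp add: \<sigma>_def)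
  have "(\<lambda>x. sqrt (pi / c) * normal_density 0 \<sigma> x) = (\<lambda>x::real. exp (- c * x\<^sup>2))"
    using assms by (simp add: normal_density_def fun_eq_iff \<sigma> real_sqrt_divide)
  moreover have "\<sigma> > 0"
    using assms by (simp add: \<sigma>_def)
  then have "integrable lborel (\<lambda>x. sqrt (pi / c) * normal_density 0 \<sigma> x)"
    by simp
  ultimately show ?thesis by simp
qed

lemma integrable_exp_neg_mult_norm_square:
  fixes c :: real
  assumes "c > 0"
  shows "integrable lborel (\<lambda>x::'a::euclidean_space. exp (- c * (norm x)\<^sup>2))"
proof (rule integrableI_bounded)
  have factor: "ennreal (exp (- c * (norm x)\<^sup>2)) = (\<Prod>b\<in>Basis. ennreal (exp (- c * (x \<bullet> b)\<^sup>2)))"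
    for x :: 'a
  proof -
    have "(norm x)\<^sup>2 = (\<Sum>b\<in>Basis. (x \<bullet> b)\<^sup>2)"
      unfolding power2_norm_eq_inner by (subst euclidean_inner) (simp add: power2_eq_square)
    then have "- c * (norm x)\<^sup>2 = (\<Sum>b\<in>Basis. - c * (x \<bullet> b)\<^sup>2)"
      by (simp add: sum_distrib_left)
    then show ?thesis
      by (simp add: exp_sum prod_ennreal)
  qed
  have "(\<integral>\<^sup>+x. ennreal (exp (- c * (norm x)\<^sup>2)) \<partial>(lborel::'a measure))
      = (\<integral>\<^sup>+x. (\<Prod>b\<in>Basis. ennreal (exp (- c * (x \<bullet> b)\<^sup>2))) \<partial>(lborel::'a measure))"
    by (simp only: factor)
  also have "\<dots> = (\<Prod>b\<in>(Basis::'a set). \<integral>\<^sup>+x. ennreal (exp (- c * x\<^sup>2)) \<partial>lborel)"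
    by (subst nn_integral_lborel_prod) auto
  also have "\<dots> < \<infinity>"
    using integrable_exp_neg_mult_square[OF assms]
    by (simp add: integrable_iff_bounded less_top[symmetric] ennreal_prod_eq_top
        power_eq_top_ennreal)
  finally show "(\<integral>\<^sup>+x. ennreal (norm (exp (- c * (norm x)\<^sup>2))) \<partial>(lborel::'a measure)) < \<infinity>"
    by simp
qed simp

lemma poly_mult_exp_neg_square_le:
  fixes u :: real
  assumes "u \<ge> 0"
  shows "(1 + u) ^ k * exp (- u\<^sup>2 / 2) \<le> exp ((real k)\<^sup>2) * exp (- u\<^sup>2 / 4)"
proof -
  have "(1 + u) ^ k * exp (- u\<^sup>2 / 2) \<le> exp (real k * u) * exp (- u\<^sup>2 / 2)"
    unfolding exp_of_nat_mult using assms
    by (intro mult_right_mono power_mono exp_ge_add_one_self) simp_all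
  also have "\<dots> \<le> exp ((real k)\<^sup>2 - u\<^sup>2 / 4)"
    unfolding exp_add[symmetric] exp_le_cancel_iff
    using zero_le_power2[of "u / 2 - real k"] by (simp add: power2_eq_square algebra_simps)
  finally show ?thesis
    by (simp add: exp_add[symmetric])
qed

lemma integrable_std_gauss_poly_bounded:
  fixes F :: "real^'n \<Rightarrow> real"
  assumes [measurable]: "F \<in> borel_measurable borel"
    and bound: "\<And>y. \<bar>F y\<bar> \<le> C * (1 + norm y) ^ k"
  shows "integrable std_gauss F"
proof -
  have [measurable]: "std_gauss_pdf \<in> borel_measurable (borel :: (real^'n) measure)"
    unfolding std_gauss_pdf_def by measurable
  define K where "K = (2 * pi) powr (- real CARD('n) / 2)"
  have "K \<ge> 0"
    by (simp add: K_def)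
  have "C \<ge> 0"
    using bound[of 0] by simp
  have dominated: "\<bar>std_gauss_pdf y * F y\<bar> \<le> K * C * exp ((real k)\<^sup>2) * exp (- (1/4) * (norm y)\<^sup>2)"
    for y :: "real^'n"
  proof -
    have "\<bar>std_gauss_pdf y * F y\<bar> = K * (\<bar>F y\<bar> * exp (- (norm y)\<^sup>2 / 2))"
      by (simp add: std_gauss_pdf_def K_def abs_mult)
    also have "\<dots> \<le> K * (C * ((1 + norm y) ^ k * exp (- (norm y)\<^sup>2 / 2)))"
      using mult_left_mono[OF mult_right_mono[OF bound[of y] exp_ge_zero] \<open>K \<ge> 0\<close>]
      by (simp only: mult.assoc)
    also have "\<dots> \<le> K * (C * (exp ((real k)\<^sup>2) * exp (- (norm y)\<^sup>2 / 4)))"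
      using \<open>C \<ge> 0\<close> \<open>K \<ge> 0\<close> by (intro mult_left_mono poly_mult_exp_neg_square_le norm_ge_zero)
    finally show ?thesis
      by (simp add: mult.assoc)
  qed
  have "integrable lborel (\<lambda>y::real^'n. std_gauss_pdf y * F y)"
  proof (rule Bochner_Integration.integrable_bound)
    show "integrable lborel (\<lambda>y::real^'n. K * C * exp ((real k)\<^sup>2) * exp (- (1/4) * (norm y)\<^sup>2))"
      by (intro integrable_mult_right integrable_exp_neg_mult_norm_square) simp
    show "AE y in lborel. norm (std_gauss_pdf y * F y)
        \<le> norm (K * C * exp ((real k)\<^sup>2) * exp (- (1/4) * (norm y)\<^sup>2))"
      unfolding real_norm_def by (intro AE_I2 order_trans[OF dominated abs_ge_self])
  qed measurable
  moreover have "std_gauss_pdf y \<ge> 0" for y :: "real^'n"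
    by (simp add: std_gauss_pdf_def)
  ultimately show ?thesis
    unfolding std_gauss_def by (subst integrable_density) auto
qed

lemma in_H_poly_bounded:
  fixes F :: "real^'n \<Rightarrow> real"
  assumes "continuous_on UNIV F" and "\<And>y. \<bar>F y\<bar> \<le> C * (1 + norm y) ^ k"
  shows "in_H F"
  unfolding in_H_def
proof
  have [measurable]: "F \<in> borel_measurable borel"
    using assms(1) by (rule borel_measurable_continuous_onI)
  then show "F \<in> borel_measurable std_gauss"
    by (simp add: std_gauss_def)
  have "\<bar>(F y)\<^sup>2\<bar> \<le> C\<^sup>2 * (1 + norm y) ^ (k * 2)" for y
    using power_mono[OF assms(2)[of y] abs_ge_zero, of 2]
    by (simp only: power2_abs abs_power2 power_mult_distrib power_mult)
  then show "integrable std_gauss (\<lambda>y. (F y)\<^sup>2)"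
    by (intro integrable_std_gauss_poly_bounded) auto
qed

section \<open>Log-sum-exp of affine functions\<close>

locale log_sum_exp =
  fixes J :: "'i set" and b :: "'i \<Rightarrow> 'a::euclidean_space" and c :: "'i \<Rightarrow> real"
  assumes finite_index: "finite J" and nonempty_index: "J \<noteq> {}"
begin

definition lse :: "'a \<Rightarrow> real" where
  "lse y = ln (\<Sum>j\<in>J. exp (b j \<bullet> y + c j))"

definition softmax :: "'i \<Rightarrow> 'a \<Rightarrow> real" where
  "softmax j y = exp (b j \<bullet> y + c j - lse y)"

definition mean :: "'a \<Rightarrow> 'a" where
  "mean y = (\<Sum>j\<in>J. softmax j y *\<^sub>R b j)"

definition covariance :: "'a \<Rightarrow> 'a \<Rightarrow> 'a" where
  "covariance y v = (\<Sum>j\<in>J. (softmax j y * (b j \<bullet> v)) *\<^sub>R b j) - (mean y \<bullet> v) *\<^sub>R mean y"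

lemma sum_exp_pos: "0 < (\<Sum>j\<in>J. exp (b j \<bullet> y + c j))"
  using finite_index nonempty_index by (intro sum_pos) auto

lemma exp_lse: "exp (lse y) = (\<Sum>j\<in>J. exp (b j \<bullet> y + c j))"
  using sum_exp_pos by (simp add: lse_def)

lemma softmax_pos: "0 < softmax j y"
  by (simp add: softmax_def)

lemma sum_softmax: "(\<Sum>j\<in>J. softmax j y) = 1"
  using sum_exp_pos[of y] by (simp add: softmax_def exp_diff exp_lse sum_divide_distrib[symmetric])

lemma has_derivative_lse: "(lse has_derivative (\<lambda>v. mean y \<bullet> v)) (at y)"
proof -
  have "(lse has_derivative
      (\<lambda>v. (\<Sum>j\<in>J. exp (b j \<bullet> y + c j) * (b j \<bullet> v)) * inverse (\<Sum>j\<in>J. exp (b j \<bullet> y + c j)))) (at y)"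
    unfolding lse_def using sum_exp_pos
    by (auto intro!: derivative_eq_intros simp: inner_commute mult.commute)
  moreover have "(\<Sum>j\<in>J. exp (b j \<bullet> y + c j) * (b j \<bullet> v)) * inverse (\<Sum>j\<in>J. exp (b j \<bullet> y + c j))
      = mean y \<bullet> v" for v
    by (simp add: mean_def softmax_def exp_diff exp_lse inner_sum_left sum_distrib_left
        divide_inverse mult.commute mult.left_commute)
  ultimately show ?thesis
    by simp
qed

lemma has_derivative_softmax:
  "(softmax j has_derivative (\<lambda>v. softmax j y * (b j \<bullet> v - mean y \<bullet> v))) (at y)"
  unfolding softmax_def
  by (auto intro!: derivative_eq_intros has_derivative_lse simp: inner_commute)

lemma has_derivative_mean: "(mean has_derivative covariance y) (at y)"
proof -
  have "((\<lambda>y. \<Sum>j\<in>J. softmax j y *\<^sub>R b j) has_derivative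
      (\<lambda>v. \<Sum>j\<in>J. (softmax j y * (b j \<bullet> v - mean y \<bullet> v)) *\<^sub>R b j)) (at y)"
    by (intro has_derivative_sum has_derivative_scaleR_left has_derivative_softmax)
  then have "(mean has_derivative
      (\<lambda>v. \<Sum>j\<in>J. (softmax j y * (b j \<bullet> v - mean y \<bullet> v)) *\<^sub>R b j)) (at y)"
    by (simp add: mean_def[abs_def])
  moreover have "(\<Sum>j\<in>J. (softmax j y * (b j \<bullet> v - mean y \<bullet> v)) *\<^sub>R b j) = covariance y v" for v
    by (simp add: covariance_def mean_def right_diff_distrib scaleR_diff_left sum_subtractf
        scaleR_sum_right mult.commute)
  ultimately show ?thesis
    by (simp add: fun_eq_iff)
qed

lemma continuous_on_softmax: "continuous_on UNIV (softmax j)"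
  using has_derivative_softmax by (intro has_derivative_continuous_on) blast

lemma continuous_on_mean: "continuous_on UNIV mean"
  using has_derivative_mean by (intro has_derivative_continuous_on) blast

lemma continuous_on_covariance: "continuous_on UNIV (\<lambda>y. covariance y v)"
  unfolding covariance_def
  by (intro continuous_intros continuous_on_softmax continuous_on_mean)

lemma norm_softmax_combination_le:
  fixes x :: "'i \<Rightarrow> 'b::real_normed_vector"
  assumes "\<And>j. j \<in> J \<Longrightarrow> norm (x j) \<le> R"
  shows "norm (\<Sum>j\<in>J. softmax j y *\<^sub>R x j) \<le> R"
proof -
  have "norm (\<Sum>j\<in>J. softmax j y *\<^sub>R x j) \<le> (\<Sum>j\<in>J. softmax j y * R)"
    using assms softmax_pos[of _ y]
    by (intro order_trans[OF norm_sum] sum_mono) (simp add: mult_left_mono less_imp_le)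
  also have "\<dots> = R"
    by (simp add: sum_distrib_right[symmetric] sum_softmax)
  finally show ?thesis .
qed

lemma norm_mean_le:
  assumes "\<And>j. j \<in> J \<Longrightarrow> norm (b j) \<le> R"
  shows "norm (mean y) \<le> R"
  unfolding mean_def using assms by (rule norm_softmax_combination_le)

lemma norm_covariance_le:
  assumes "\<And>j. j \<in> J \<Longrightarrow> norm (b j) \<le> R"
  shows "norm (covariance y v) \<le> 2 * R\<^sup>2 * norm v"
proof -
  have rank_one_le: "norm ((x \<bullet> v) *\<^sub>R x) \<le> R\<^sup>2 * norm v" if "norm x \<le> R" for x :: 'a
  proof -
    have "norm ((x \<bullet> v) *\<^sub>R x) \<le> (norm x)\<^sup>2 * norm v"
      using mult_right_mono[OF Cauchy_Schwarz_ineq2[of x v] norm_ge_zero[of x]]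
      by (simp add: power2_eq_square mult_ac)
    also have "\<dots> \<le> R\<^sup>2 * norm v"
      using that by (intro mult_right_mono power_mono) simp_all
    finally show ?thesis .
  qed
  let ?second_moment = "\<Sum>j\<in>J. (softmax j y * (b j \<bullet> v)) *\<^sub>R b j"
  have "norm ?second_moment \<le> R\<^sup>2 * norm v"
    using norm_softmax_combination_le[of "\<lambda>j. (b j \<bullet> v) *\<^sub>R b j"] rank_one_le assms by simp
  moreover have "norm ((mean y \<bullet> v) *\<^sub>R mean y) \<le> R\<^sup>2 * norm v"
    using rank_one_le norm_mean_le assms by blast
  ultimately show ?thesis
    unfolding covariance_def
    using norm_triangle_ineq4[of ?second_moment "(mean y \<bullet> v) *\<^sub>R mean y"] by linarith
qed

lemma ln_card_nonneg: "ln (real (card J)) \<ge> 0"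
  using finite_index nonempty_index by (simp add: card_gt_0_iff Suc_le_eq)

lemma lse_ge:
  assumes "j \<in> J"
  shows "b j \<bullet> y + c j \<le> lse y"
proof -
  have "exp (b j \<bullet> y + c j) \<le> (\<Sum>i\<in>J. exp (b i \<bullet> y + c i))"
    using assms finite_index by (intro member_le_sum) auto
  then show ?thesis
    unfolding lse_def using sum_exp_pos[of y] by (simp add: ln_ge_iff)
qed

lemma lse_le:
  assumes "\<And>j. j \<in> J \<Longrightarrow> b j \<bullet> y + c j \<le> T"
  shows "lse y \<le> ln (real (card J)) + T"
proof -
  have card_pos: "real (card J) > 0"
    using finite_index nonempty_index by (simp add: card_gt_0_iff)
  have "(\<Sum>j\<in>J. exp (b j \<bullet> y + c j)) \<le> real (card J) * exp T"
    using assms sum_mono[of J "\<lambda>j. exp (b j \<bullet> y + c j)" "\<lambda>_. exp T"] by simp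
  then have "lse y \<le> ln (real (card J) * exp T)"
    unfolding lse_def using sum_exp_pos[of y] card_pos by simp
  also have "\<dots> = ln (real (card J)) + T"
    using card_pos by (simp add: ln_mult_pos)
  finally show ?thesis .
qed

lemma abs_lse_le:
  assumes "\<And>j. j \<in> J \<Longrightarrow> norm (b j) \<le> R" and "\<And>j. j \<in> J \<Longrightarrow> \<bar>c j\<bar> \<le> M"
  shows "\<bar>lse y\<bar> \<le> ln (real (card J)) + R * norm y + M"
proof -
  have affine_bound: "\<bar>b j \<bullet> y + c j\<bar> \<le> R * norm y + M" if "j \<in> J" for j
  proof -
    have "\<bar>b j \<bullet> y\<bar> \<le> R * norm y"
      using Cauchy_Schwarz_ineq2[of "b j" y]
        mult_right_mono[OF assms(1)[OF that] norm_ge_zero[of y]]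
      by linarith
    then show ?thesis
      using assms(2)[OF that] by linarith
  qed
  obtain j where "j \<in> J"
    using nonempty_index by blast
  have "lse y \<le> ln (real (card J)) + (R * norm y + M)"
    using affine_bound by (intro lse_le) (simp add: abs_le_iff)
  then show ?thesis
    using lse_ge[OF \<open>j \<in> J\<close>, of y] affine_bound[OF \<open>j \<in> J\<close>] ln_card_nonneg by linarith
qed

lemma bounded_coefficients: "\<exists>R M. \<forall>j\<in>J. norm (b j) \<le> R \<and> \<bar>c j\<bar> \<le> M"
  using finite_index
  by (intro exI[of _ "\<Sum>j\<in>J. norm (b j)"] exI[of _ "\<Sum>j\<in>J. \<bar>c j\<bar>"]) (auto intro: member_le_sum)

lemma lse_linear_growth: "\<exists>C. \<forall>y. \<bar>lse y\<bar> \<le> C * (1 + norm y)"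
proof -
  obtain R M where bounds: "\<And>j. j \<in> J \<Longrightarrow> norm (b j) \<le> R" "\<And>j. j \<in> J \<Longrightarrow> \<bar>c j\<bar> \<le> M"
    using bounded_coefficients by blast
  obtain j where "j \<in> J"
    using nonempty_index by blast
  then have "R \<ge> 0" "M \<ge> 0"
    using bounds norm_ge_zero abs_ge_zero order_trans by blast+
  define C where "C = ln (real (card J)) + R + M"
  have "\<bar>lse y\<bar> \<le> C * (1 + norm y)" for y
  proof -
    have "\<bar>lse y\<bar> \<le> ln (real (card J)) + R * norm y + M"
      using bounds by (intro abs_lse_le)
    moreover have "R * norm y \<le> C * norm y"
      unfolding C_def using \<open>M \<ge> 0\<close> ln_card_nonneg by (intro mult_right_mono) auto
    ultimately show ?thesis
      unfolding distrib_left mult_1_right using C_def \<open>R \<ge> 0\<close> by linarith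
  qed
  then show ?thesis
    by blast
qed

lemma mean_bounded: "\<exists>R. \<forall>y. norm (mean y) \<le> R"
  using bounded_coefficients norm_mean_le by meson

lemma covariance_bounded: "\<exists>B. \<forall>y v. norm (covariance y v) \<le> B * norm v"
  using bounded_coefficients norm_covariance_le by meson

end

section \<open>Logarithm of a Gaussian mixture\<close>

locale log_gaussian_mixture =
  fixes J :: "'i set" and a :: "'i \<Rightarrow> 'a::euclidean_space" and \<alpha> w :: real
  assumes finite_components: "finite J" and nonempty_components: "J \<noteq> {}"
    and weight_pos: "w > 0"
begin

sublocale log_sum_exp J "\<lambda>j. (2 * \<alpha>) *\<^sub>R a j" "\<lambda>j. - (\<alpha> * (norm (a j))\<^sup>2)"
  using finite_components nonempty_components by unfold_locales

definition log_density :: "'a \<Rightarrow> real" where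
  "log_density y = ln (w * (\<Sum>j\<in>J. exp (- \<alpha> * (norm (y - a j))\<^sup>2)))"

definition grad :: "'a \<Rightarrow> 'a" where
  "grad y = mean y - (2 * \<alpha>) *\<^sub>R y"

definition hessian :: "'a \<Rightarrow> 'a \<Rightarrow> 'a" where
  "hessian y v = covariance y v - (2 * \<alpha>) *\<^sub>R v"

lemma log_density_eq: "log_density y = ln w - \<alpha> * (norm y)\<^sup>2 + lse y"
proof -
  have "exp (- \<alpha> * (norm (y - a j))\<^sup>2)
      = exp (- \<alpha> * (norm y)\<^sup>2) * exp ((2 * \<alpha>) *\<^sub>R a j \<bullet> y + - (\<alpha> * (norm (a j))\<^sup>2))" for j
    by (simp add: exp_add[symmetric] power2_norm_eq_inner inner_diff_left inner_diff_right
        inner_commute algebra_simps)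
  then have "(\<Sum>j\<in>J. exp (- \<alpha> * (norm (y - a j))\<^sup>2)) = exp (- \<alpha> * (norm y)\<^sup>2) * exp (lse y)"
    unfolding exp_lse sum_distrib_left by simp
  then show ?thesis
    using weight_pos by (simp add: log_density_def ln_mult_pos)
qed

lemma has_derivative_log_density: "(log_density has_derivative (\<lambda>v. grad y \<bullet> v)) (at y)"
proof -
  have derivative_eq: "(\<lambda>v. 0 - \<alpha> * (y \<bullet> v + v \<bullet> y) + m \<bullet> v) = (\<lambda>v. (m - (2 * \<alpha>) *\<^sub>R y) \<bullet> v)"
    for m :: 'a
    by (simp add: fun_eq_iff inner_diff_left inner_commute algebra_simps)
  have "((\<lambda>y. ln w - \<alpha> * (y \<bullet> y) + lse y) has_derivative
      (\<lambda>v. 0 - \<alpha> * (y \<bullet> v + v \<bullet> y) + mean y \<bullet> v)) (at y)"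
    by (intro has_derivative_add has_derivative_diff has_derivative_const has_derivative_mult_right
        has_derivative_inner has_derivative_ident has_derivative_lse)
  then show ?thesis
    unfolding derivative_eq grad_def[symmetric]
    by (simp add: log_density_eq[abs_def] power2_norm_eq_inner)
qed

lemma has_derivative_grad: "(grad has_derivative hessian y) (at y)"
  unfolding grad_def[abs_def] hessian_def[abs_def]
  by (intro has_derivative_diff has_derivative_mean has_derivative_scaleR_right
      has_derivative_ident)

lemma continuous_on_log_density: "continuous_on UNIV log_density"
  using has_derivative_log_density by (intro has_derivative_continuous_on) blast

lemma continuous_on_grad: "continuous_on UNIV grad"
  using has_derivative_grad by (intro has_derivative_continuous_on) blast

lemma continuous_on_hessian: "continuous_on UNIV (\<lambda>y. hessian y v)"
  unfolding hessian_def by (intro continuous_intros continuous_on_covariance)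

lemma log_density_quadratic_growth: "\<exists>C. \<forall>y. \<bar>log_density y\<bar> \<le> C * (1 + norm y)\<^sup>2"
proof -
  obtain C where C: "\<And>y. \<bar>lse y\<bar> \<le> C * (1 + norm y)"
    using lse_linear_growth by blast
  have "C \<ge> 0"
    using C[of 0] by simp
  have "\<bar>log_density y\<bar> \<le> (\<bar>ln w\<bar> + \<bar>\<alpha>\<bar> + C) * (1 + norm y)\<^sup>2" for y
  proof -
    have "\<bar>\<alpha> * (norm y)\<^sup>2\<bar> = \<bar>\<alpha>\<bar> * (norm y)\<^sup>2"
      by (simp add: abs_mult)
    then have "\<bar>log_density y\<bar> \<le> \<bar>ln w\<bar> + \<bar>\<alpha>\<bar> * (norm y)\<^sup>2 + C * (1 + norm y)"
      using C[of y] unfolding log_density_eq by linarith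
    also have "\<dots> \<le> (\<bar>ln w\<bar> + \<bar>\<alpha>\<bar> + C) * (1 + norm y)\<^sup>2"
      using \<open>C \<ge> 0\<close> by (simp add: power2_eq_square algebra_simps)
    finally show ?thesis .
  qed
  then show ?thesis
    by blast
qed

lemma grad_linear_growth: "\<exists>C. \<forall>y. norm (grad y) \<le> C * (1 + norm y)"
proof -
  obtain R where R: "\<And>y. norm (mean y) \<le> R"
    using mean_bounded by blast
  have "R \<ge> 0"
    using R[of 0] norm_ge_zero order_trans by blast
  have "norm (grad y) \<le> (R + 2 * \<bar>\<alpha>\<bar>) * (1 + norm y)" for y
  proof -
    have "norm (grad y) \<le> R + 2 * \<bar>\<alpha>\<bar> * norm y"
      using R[of y] norm_triangle_ineq4[of "mean y" "(2 * \<alpha>) *\<^sub>R y"]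
      unfolding grad_def by (simp add: abs_mult)
    also have "\<dots> \<le> (R + 2 * \<bar>\<alpha>\<bar>) * (1 + norm y)"
      using \<open>R \<ge> 0\<close> by (simp add: algebra_simps)
    finally show ?thesis .
  qed
  then show ?thesis
    by blast
qed

lemma hessian_bounded: "\<exists>B. \<forall>y v. norm (hessian y v) \<le> B * norm v"
proof -
  obtain B where B: "\<And>y v. norm (covariance y v) \<le> B * norm v"
    using covariance_bounded by blast
  have "norm (hessian y v) \<le> (B + 2 * \<bar>\<alpha>\<bar>) * norm v" for y v
    using B[of y v] norm_triangle_ineq4[of "covariance y v" "(2 * \<alpha>) *\<^sub>R v"]
    unfolding hessian_def by (simp add: abs_mult distrib_right)
  then show ?thesis
    by blast
qed

end

lemma abs_trace_le:
  fixes L :: "real^'n \<Rightarrow> real^'n"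
  assumes "\<And>v. norm (L v) \<le> B * norm v"
  shows "\<bar>\<Sum>i\<in>UNIV. L (axis i 1) $ i\<bar> \<le> real CARD('n) * B"
proof -
  have "\<bar>L (axis i 1) $ i\<bar> \<le> B" for i
    using component_le_norm_cart[of "L (axis i 1)" i] assms[of "axis i 1"]
    by (simp add: norm_axis_1)
  then have "\<bar>\<Sum>i\<in>UNIV. L (axis i 1) $ i\<bar> \<le> (\<Sum>i\<in>(UNIV::'n set). B)"
    by (intro order_trans[OF sum_abs] sum_mono)
  then show ?thesis
    by simp
qed

locale log_gaussian_mixture_vec = log_gaussian_mixture J a \<alpha> w
  for J :: "'i set" and a :: "'i \<Rightarrow> real^'n" and \<alpha> w :: real
begin

lemma in_H_log_density: "in_H log_density"
proof -
  obtain C where "\<And>y. \<bar>log_density y\<bar> \<le> C * (1 + norm y)\<^sup>2"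
    using log_density_quadratic_growth by blast
  with continuous_on_log_density show ?thesis
    by (rule in_H_poly_bounded)
qed

lemma in_H_grad_component: "in_H (\<lambda>y. grad y $ i)"
proof -
  obtain C where C: "\<And>y. norm (grad y) \<le> C * (1 + norm y)"
    using grad_linear_growth by blast
  have "\<bar>grad y $ i\<bar> \<le> C * (1 + norm y) ^ 1" for y
    using component_le_norm_cart[of "grad y" i] C[of y] by simp
  then show ?thesis
    by (rule in_H_poly_bounded[OF continuous_on_component[OF continuous_on_grad]])
qed

lemma in_H_norm_grad: "in_H (\<lambda>y. norm (grad y))"
proof -
  obtain C where "\<And>y. norm (grad y) \<le> C * (1 + norm y)"
    using grad_linear_growth by blast
  then have "\<bar>norm (grad y)\<bar> \<le> C * (1 + norm y) ^ 1" for y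
    by simp
  then show ?thesis
    by (rule in_H_poly_bounded[OF continuous_on_norm[OF continuous_on_grad]])
qed

lemma integrable_norm_grad_pow4: "integrable std_gauss (\<lambda>y. norm (grad y) ^ 4)"
proof -
  obtain C where C: "\<And>y. norm (grad y) \<le> C * (1 + norm y)"
    using grad_linear_growth by blast
  have "\<bar>norm (grad y) ^ 4\<bar> \<le> C ^ 4 * (1 + norm y) ^ 4" for y
    using power_mono[OF C[of y] norm_ge_zero, of 4] by (simp add: power_mult_distrib)
  moreover have "(\<lambda>y. norm (grad y) ^ 4) \<in> borel_measurable borel"
    by (intro borel_measurable_continuous_onI continuous_intros continuous_on_grad)
  ultimately show ?thesis
    by (intro integrable_std_gauss_poly_bounded)
qed

lemma continuous_on_trace_hessian: "continuous_on UNIV (\<lambda>y. \<Sum>i\<in>UNIV. hessian y (axis i 1) $ i)"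
  by (intro continuous_intros continuous_on_hessian)

lemma in_H_trace_hessian: "in_H (\<lambda>y. \<Sum>i\<in>UNIV. hessian y (axis i 1) $ i)"
proof -
  obtain B where "\<And>y v. norm (hessian y v) \<le> B * norm v"
    using hessian_bounded by blast
  then have "\<bar>\<Sum>i\<in>UNIV. hessian y (axis i 1) $ i\<bar> \<le> (real CARD('n) * B) * (1 + norm y) ^ 0" for y
    using abs_trace_le[of "hessian y" B] by simp
  then show ?thesis
    by (rule in_H_poly_bounded[OF continuous_on_trace_hessian])
qed

end

lemma kde_shat_pos:
  assumes "nd > 0"
  shows "kde_shat nu nd > 0"
proof -
  have "kde_s nu nd > 0"
    using assms by (simp add: kde_s_def)
  moreover have "(real nd - 1) / real nd \<ge> 0"
    using assms by simp
  ultimately show ?thesis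
    unfolding kde_shat_def by (intro divide_pos_pos real_sqrt_gt_zero add_pos_nonneg) auto
qed

theorem proposition1:
  fixes nd :: nat and eta :: "nat \<Rightarrow> real^'n"
  assumes "nd > 1"
    and "(1 / real nd) *\<^sub>R (\<Sum>j\<in>{1..nd}. eta j) = 0"
    and "\<forall>i k. (1 / (real nd - 1)) * (\<Sum>j\<in>{1..nd}. eta j $ i * eta j $ k)
                 = (if i = k then 1 else 0)"
  defines "f \<equiv> \<lambda>y. ln (pH nd eta y)"
  shows "continuous_on UNIV f \<and> in_H f \<and>
    (\<exists>g Hf. (\<forall>y. (f has_derivative (\<lambda>v. g y \<bullet> v)) (at y)) \<and>
           (\<forall>y. (g has_derivative Hf y) (at y)) \<and>
           continuous_on UNIV g \<and>
           (\<forall>i. in_H (\<lambda>y. g y $ i)) \<and>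
           in_H (\<lambda>y. norm (g y)) \<and>
           integrable std_gauss (\<lambda>y. (norm (g y)) ^ 4) \<and>
           continuous_on UNIV (\<lambda>y. \<Sum>i\<in>UNIV. Hf y (axis i 1) $ i) \<and>
           in_H (\<lambda>y. \<Sum>i\<in>UNIV. Hf y (axis i 1) $ i))"
proof -
  define sh where "sh = kde_shat CARD('n) nd"
  define w where "w = 1 / (real nd * (sqrt (2 * pi) * sh) ^ CARD('n))"
  have "sh > 0"
    using assms(1) by (simp add: sh_def kde_shat_pos)
  then interpret log_gaussian_mixture_vec "{1..nd}" "\<lambda>j. (sh / kde_s CARD('n) nd) *\<^sub>R eta j"
    "1 / (2 * sh\<^sup>2)" w
    using assms(1) by unfold_locales (simp_all add: w_def)
  have f_eq: "f = log_density"
  proof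
    fix y
    have "pH nd eta y = w * (\<Sum>j\<in>{1..nd}.
        exp (- (1 / (2 * sh\<^sup>2)) * (norm (y - (sh / kde_s CARD('n) nd) *\<^sub>R eta j))\<^sup>2))"
      unfolding pH_def Let_def sh_def[symmetric] w_def
      by (simp add: sum_divide_distrib[symmetric] sum_distrib_left[symmetric] mult.commute)
    then show "f y = log_density y"
      unfolding f_def log_density_def by simp
  qed
  show ?thesis
    unfolding f_eq
    by (intro conjI exI[of _ grad] exI[of _ hessian] allI has_derivative_log_density
        has_derivative_grad continuous_on_log_density continuous_on_grad in_H_log_density
        in_H_grad_component in_H_norm_grad integrable_norm_grad_pow4
        continuous_on_trace_hessian in_H_trace_hessian)
qed

end
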